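(* Let $T$, $\mathcal{S}=\mathcal{S}_+\cup\mathcal{S}_-$, $\Psi$, $U$, $\lambda$ and $P_\lambda$ be as in the context. Consider the following three discrete-time QBDs on phase space $\mathcal{S}$: (i) the QBD with blocks $\Delta_{-1}=\frac12\begin{bmatrix}0&0\\0&I\end{bmatrix}$, $\Delta_0=\begin{bmatrix}0&P_{\lambda+-}\\0&\frac12P_{\lambda--}\end{bmatrix}$, $\Delta_1=\begin{bmatrix}P_{\lambda++}&0\\\frac12P_{\lambda-+}&0\end{bmatrix}$; (ii) the QBD with blocks $A'_{-1}=\frac12\begin{bmatrix}0&0\\0&I\end{bmatrix}$, $A'_0=\frac12\begin{bmatrix}I&P_{\lambda+-}\\0&P_{\lambda--}\end{bmatrix}$, $A'_1=\frac12\begin{bmatrix}P_{\lambda++}&0\\P_{\lambda-+}&0\end{bmatrix}$; (iii) the QBD with blocks $A_{-1}=\begin{bmatrix}0&0\\0&(I-\lambda^{-1}U)^{-1}\end{bmatrix}$, $A_0=\begin{bmatrix}0&P_{\lambda+-}\\0&0\end{bmatrix}$, $A_1=\begin{bmatrix}P_{\lambda++}&0\\0&0\end{bmatrix}$. Then the QBD in (ii) has the same $\mathcal{G}$-matrix as the QBD in (i) and the same $\mathcal{G}$-matrix as the QBD in (iii).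
   Context: $T$ is the generator of a continuous-time Markov chain on a finite set $\mathcal{S}=\mathcal{S}_+\cup\mathcal{S}_-$ (disjoint, both nonempty), partitioned into blocks $T_{++},T_{+-},T_{-+},T_{--}$ according to $\mathcal{S}_\pm$. $\Psi$ is the minimal nonnegative solution of $T_{+-}+\Psi T_{--}+T_{++}\Psi+\Psi T_{-+}\Psi=0$ (the first-return probability matrix of the unit-rate fluid queue with phase generator $T$, rates $+1$ on $\mathcal{S}_+$ and $-1$ on $\mathcal{S}_-$), and $U:=T_{--}+T_{-+}\Psi$. $\lambda>0$ satisfies $\lambda\ge\max_i|T_{ii}|$ and $P_\lambda:=I+\lambda^{-1}T$ with blocks $P_{\lambda++}$ etc. A discrete-time quasi-birth-death process (QBD) with transition blocks $L_{-1},L_0,L_1$ is a Markov chain $\{(Y_n,\kappa_n)\}$ on $\mathbb{Z}\times\mathcal{S}$ with $\mathbb{P}[Y_n=k+d,\kappa_n=j\mid Y_{n-1}=k,\kappa_{n-1}=i]=(L_d)_{ij}$ for $d\in\{-1,0,1\}$. Its $\mathcal{G}$-matrix has entries $\mathcal{G}_{ij}=\mathbb{P}[\theta<\infty,\kappa_\theta=j\mid Y_0=k,\kappa_0=i]$ with $\theta=\inf\{n>0:Y_n=k-1\}$. Matrices are partitioned into blocks according to $\mathcal{S}_+,\mathcal{S}_-$. *)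

theory Defs
  imports "HOL-Analysis.Analysis"
begin

text \<open>Matrices indexed by a finite phase space 's are functions 's \<Rightarrow> 's \<Rightarrow> real.
  The partition of the phase space is given by the set Sp (= S_+); S_- is its complement.\<close>

type_synonym 's rmat = "'s \<Rightarrow> 's \<Rightarrow> real"

definition idm :: "'s rmat" where
  "idm i j = (if i = j then 1 else 0)"

definition zm :: "'s rmat" where
  "zm i j = 0"

definition Sm :: "'s set \<Rightarrow> 's set" where
  "Sm Sp = - Sp"

definition blk :: "'s set \<Rightarrow> 's rmat \<Rightarrow> 's rmat \<Rightarrow> 's rmat \<Rightarrow> 's rmat \<Rightarrow> 's rmat" where
  "blk Sp A B C D i j =
     (if i \<in> Sp then (if j \<in> Sp then A i j else B i j)
      else (if j \<in> Sp then C i j else D i j))"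

definition smul :: "real \<Rightarrow> 's rmat \<Rightarrow> 's rmat" where
  "smul c M i j = c * M i j"

definition is_generator :: "('s::finite) rmat \<Rightarrow> bool" where
  "is_generator T \<longleftrightarrow> (\<forall>i j. i \<noteq> j \<longrightarrow> T i j \<ge> 0) \<and> (\<forall>i. (\<Sum>j\<in>UNIV. T i j) = 0)"

text \<open>Left-hand side of the Riccati equation
  T_{+-} + Psi T_{--} + T_{++} Psi + Psi T_{-+} Psi, at entry (i,j), i in S+, j in S-.\<close>
definition riccati :: "('s::finite) set \<Rightarrow> 's rmat \<Rightarrow> 's rmat \<Rightarrow> 's \<Rightarrow> 's \<Rightarrow> real" where
  "riccati Sp T X i j =
     T i j + (\<Sum>k\<in>Sm Sp. X i k * T k j) + (\<Sum>k\<in>Sp. T i k * X k j)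
       + (\<Sum>k\<in>Sm Sp. \<Sum>l\<in>Sp. X i k * T k l * X l j)"

definition nonneg_riccati_sol :: "('s::finite) set \<Rightarrow> 's rmat \<Rightarrow> 's rmat \<Rightarrow> bool" where
  "nonneg_riccati_sol Sp T X \<longleftrightarrow>
     (\<forall>i\<in>Sp. \<forall>j\<in>Sm Sp. X i j \<ge> 0 \<and> riccati Sp T X i j = 0)"

text \<open>Psi is the minimal nonnegative solution (only its S+ x S- block is meaningful).\<close>
definition min_nonneg_riccati_sol :: "('s::finite) set \<Rightarrow> 's rmat \<Rightarrow> 's rmat \<Rightarrow> bool" where
  "min_nonneg_riccati_sol Sp T Psi \<longleftrightarrow>
     nonneg_riccati_sol Sp T Psi \<and>
     (\<forall>X. nonneg_riccati_sol Sp T X \<longrightarrow> (\<forall>i\<in>Sp. \<forall>j\<in>Sm Sp. Psi i j \<le> X i j))"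

text \<open>U = T_{--} + T_{-+} Psi (meaningful on S- x S-).\<close>
definition Umat :: "('s::finite) set \<Rightarrow> 's rmat \<Rightarrow> 's rmat \<Rightarrow> 's rmat" where
  "Umat Sp T Psi i j = T i j + (\<Sum>k\<in>Sp. T i k * Psi k j)"

definition Plam :: "real \<Rightarrow> 's rmat \<Rightarrow> 's rmat" where
  "Plam lam T i j = idm i j + T i j / lam"

definition inv_on :: "('s::finite) set \<Rightarrow> 's rmat \<Rightarrow> 's rmat" where
  "inv_on A M = (SOME B. \<forall>i\<in>A. \<forall>j\<in>A. (\<Sum>k\<in>A. M i k * B k j) = idm i j)"

text \<open>Taboo probabilities of the QBD with blocks Lm (level -1), L0, L1, started at level 0
  (by level-homogeneity, any starting level k gives the same values, levels shifted by k):
  taboo n i l j = P[Y_n = l, kappa_n = j, Y_m >= 0 for 1 <= m <= n | Y_0 = 0, kappa_0 = i].\<close>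
fun taboo :: "('s::finite) rmat \<Rightarrow> 's rmat \<Rightarrow> 's rmat \<Rightarrow> nat \<Rightarrow> 's \<Rightarrow> nat \<Rightarrow> 's \<Rightarrow> real" where
  "taboo Lm L0 L1 0 i l j = (if l = 0 \<and> i = j then 1 else 0)"
| "taboo Lm L0 L1 (Suc n) i l j =
     (\<Sum>k\<in>UNIV. taboo Lm L0 L1 n i l k * L0 k j
               + (if l > 0 then taboo Lm L0 L1 n i (l - 1) k * L1 k j else 0)
               + taboo Lm L0 L1 n i (Suc l) k * Lm k j)"

text \<open>G-matrix: G i j = P[theta < infinity, kappa_theta = j | Y_0 = 0, kappa_0 = i],
  theta = first n > 0 with Y_n = -1; the event {theta = n+1, kappa_theta = j} has probability
  sum_k taboo n i 0 k * Lm k j.\<close>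
definition Gmat :: "('s::finite) rmat \<Rightarrow> 's rmat \<Rightarrow> 's rmat \<Rightarrow> 's rmat" where
  "Gmat Lm L0 L1 i j = (\<Sum>n. \<Sum>k\<in>UNIV. taboo Lm L0 L1 n i 0 k * Lm k j)"

end

theory Submission
  imports Defs
begin

text \<open>All three \<open>G\<close>-matrices vanish on the columns in \<open>S\<^sub>+\<close>, and each is the minimal
  nonnegative solution of \<open>G = L\<^sub>-\<^sub>1 + L\<^sub>0 G + L\<^sub>1 G\<^sup>2\<close>. Write the \<open>G\<close>-matrix of QBD (ii) as
  \<open>[0, X; 0, Y]\<close> and let \<open>N = P\<^sub>\<bullet>\<^sub>- + P\<^sub>\<bullet>\<^sub>+ X\<close>. Its equation says \<open>X = N\<^sub>+\<^sub>- Y\<close> and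
  \<open>(2I - N\<^sub>-\<^sub>-) Y = I\<close>; eliminating \<open>Y\<close> shows that \<open>X\<close> solves the Riccati equation, hence
  \<open>\<Psi> \<le> X\<close>. Conversely \<open>[0, \<Psi>; 0, (2I - N(\<Psi>)\<^sub>-\<^sub>-)\<^sup>-\<^sup>1]\<close> is a nonnegative solution, the
  inverse being nonnegative because \<open>N(\<Psi>)\<close> is substochastic; so \<open>X = \<Psi>\<close> by minimality and
  \<open>Y = (I - \<lambda>\<^sup>-\<^sup>1 U)\<^sup>-\<^sup>1\<close>. Finally, the \<open>G\<close>-matrices of (i) and (iii) are nonnegative
  supersolutions of the equation of (ii) and vice versa (for (iii) this uses the value of \<open>Y\<close>),
  so minimality forces equality.\<close>

type_synonym 's mat = "real^'s^'s"

lemma matrix_mult_nth: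
  "((A::real^'n::finite^'m) ** (B::real^'p^'n)) $ i $ j = (\<Sum>k\<in>UNIV. A $ i $ k * B $ k $ j)"
  by (simp add: matrix_matrix_mult_def)

lemma matrix_add_rdistrib: "((B + C) ** A) = (B ** A) + (C ** (A::'s::finite mat))"
  by (simp add: vec_eq_iff matrix_mult_nth sum.distrib algebra_simps)

lemma matrix_mult_sum_right: "(A::'s::finite mat) ** (\<Sum>x\<in>S. F x) = (\<Sum>x\<in>S. A ** F x)"
  by (induction S rule: infinite_finite_induct) (auto simp: matrix_add_ldistrib)

lemma less_eq_mat_iff: "(A::'s::finite mat) \<le> B \<longleftrightarrow> (\<forall>i j. A$i$j \<le> B$i$j)"
  by (simp add: less_eq_vec_def)

lemma matrix_mult_nonneg: "0 \<le> (A::'s::finite mat) \<Longrightarrow> 0 \<le> (B::'s mat) \<Longrightarrow> 0 \<le> A ** B"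
  unfolding less_eq_mat_iff by (auto simp: matrix_mult_nth intro!: sum_nonneg)

lemma matrix_mult_left_mono: "0 \<le> (A::'s::finite mat) \<Longrightarrow> (B::'s mat) \<le> C \<Longrightarrow> A ** B \<le> A ** C"
  unfolding less_eq_mat_iff by (auto simp: matrix_mult_nth intro!: sum_mono mult_left_mono)

lemma matrix_mult_right_mono: "0 \<le> (A::'s::finite mat) \<Longrightarrow> (B::'s mat) \<le> C \<Longrightarrow> B ** A \<le> C ** A"
  unfolding less_eq_mat_iff by (auto simp: matrix_mult_nth intro!: sum_mono mult_right_mono)

lemma mat_1_nonneg: "0 \<le> (mat 1 :: 's::finite mat)"
  by (simp add: less_eq_mat_iff mat_def)

fun matrix_pow :: "'s::finite mat \<Rightarrow> nat \<Rightarrow> 's mat" where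
  "matrix_pow X 0 = mat 1"
| "matrix_pow X (Suc n) = X ** matrix_pow X n"

lemma matrix_pow_nonneg: "0 \<le> X \<Longrightarrow> 0 \<le> matrix_pow X n"
  by (induction n) (simp_all add: mat_1_nonneg matrix_mult_nonneg)

definition nonneg_mat :: "'s rmat \<Rightarrow> bool" where
  "nonneg_mat A \<longleftrightarrow> (\<forall>i j. 0 \<le> A i j)"

lemma nonneg_mat_zm: "nonneg_mat zm"
  by (simp add: nonneg_mat_def zm_def)

lemma nonneg_mat_idm: "nonneg_mat idm"
  by (simp add: nonneg_mat_def idm_def)

lemma nonneg_mat_smul: "c \<ge> 0 \<Longrightarrow> nonneg_mat M \<Longrightarrow> nonneg_mat (smul c M)"
  by (simp add: nonneg_mat_def smul_def)

lemma nonneg_mat_blk: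
  "nonneg_mat a \<Longrightarrow> nonneg_mat b \<Longrightarrow> nonneg_mat c \<Longrightarrow> nonneg_mat d \<Longrightarrow> nonneg_mat (blk Sp a b c d)"
  by (simp add: nonneg_mat_def blk_def)

lemmas nonneg_mat_intros = nonneg_mat_zm nonneg_mat_idm nonneg_mat_smul nonneg_mat_blk

section \<open>First passage to the level below\<close>

text \<open>For the QBD with blocks \<open>Lm, L0, L1\<close> started in level \<open>a\<close>, \<open>first_passage n a\<close> is the
  matrix of probabilities that level \<open>-1\<close> is first entered at step \<open>n + 1\<close>, and
  \<open>taboo_mat n a l\<close> that of being in level \<open>l\<close> at step \<open>n\<close> without having entered level \<open>-1\<close>.
  Both condition on the first step, whereas \<^const>\<open>taboo\<close> conditions on the last one.\<close>

fun first_passage :: "'s::finite mat \<Rightarrow> 's mat \<Rightarrow> 's mat \<Rightarrow> nat \<Rightarrow> nat \<Rightarrow> 's mat" where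
  "first_passage Lm L0 L1 0 a = (if a = 0 then Lm else 0)"
| "first_passage Lm L0 L1 (Suc n) a = L0 ** first_passage Lm L0 L1 n a
     + L1 ** first_passage Lm L0 L1 n (Suc a)
     + (if a = 0 then 0 else Lm ** first_passage Lm L0 L1 n (a - 1))"

fun taboo_mat :: "'s::finite mat \<Rightarrow> 's mat \<Rightarrow> 's mat \<Rightarrow> nat \<Rightarrow> nat \<Rightarrow> nat \<Rightarrow> 's mat" where
  "taboo_mat Lm L0 L1 0 a l = (if a = l then mat 1 else 0)"
| "taboo_mat Lm L0 L1 (Suc n) a l = L0 ** taboo_mat Lm L0 L1 n a l
     + L1 ** taboo_mat Lm L0 L1 n (Suc a) l
     + (if a = 0 then 0 else Lm ** taboo_mat Lm L0 L1 n (a - 1) l)"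

lemma taboo_mat_Suc_last_step:
  "taboo_mat Lm L0 L1 (Suc n) a l = taboo_mat Lm L0 L1 n a l ** L0
     + (if l = 0 then 0 else taboo_mat Lm L0 L1 n a (l - 1) ** L1)
     + taboo_mat Lm L0 L1 n a (Suc l) ** Lm"
proof (induction n arbitrary: a l)
  case 0
  then show ?case by (cases a; cases l; auto)
next
  case (Suc n)
  then show ?case
    apply (subst (1 2 3) taboo_mat.simps(2))
    apply (subst (1 2 3) Suc.IH)
    by (cases "a = 0"; cases "l = 0";
        simp add: matrix_add_ldistrib matrix_add_rdistrib matrix_mul_assoc algebra_simps)
qed

definition vmat :: "'s::finite rmat \<Rightarrow> 's mat" where
  "vmat A = (\<chi> i j. A i j)"

lemma vmat_nth [simp]: "vmat A $ i $ j = A i j"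
  by (simp add: vmat_def)

lemma vmat_nonneg: "nonneg_mat A \<Longrightarrow> 0 \<le> vmat A"
  by (simp add: nonneg_mat_def less_eq_mat_iff)

lemma taboo_eq_taboo_mat: "taboo Lm L0 L1 n i l j = taboo_mat (vmat Lm) (vmat L0) (vmat L1) n 0 l $ i $ j"
proof (induction n arbitrary: l j)
  case 0
  then show ?case by (simp add: mat_def)
next
  case (Suc n)
  show ?case
    unfolding taboo_mat_Suc_last_step taboo.simps Suc.IH
    by (simp add: matrix_mult_nth sum.distrib)
qed

lemma first_passage_eq_taboo_mat: "first_passage Lm L0 L1 n a = taboo_mat Lm L0 L1 n a 0 ** Lm"
  by (induction n arbitrary: a) (auto simp: matrix_add_rdistrib matrix_mul_assoc)

lemma Gmat_eq_suminf_first_passage: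
  "Gmat Lm L0 L1 i j = (\<Sum>n. first_passage (vmat Lm) (vmat L0) (vmat L1) n 0 $ i $ j)"
  unfolding Gmat_def first_passage_eq_taboo_mat taboo_eq_taboo_mat by (simp add: matrix_mult_nth)

lemma first_passage_nonneg:
  assumes "0 \<le> Lm" "0 \<le> L0" "0 \<le> L1"
  shows "0 \<le> first_passage Lm L0 L1 n a"
  by (induction n arbitrary: a) (auto simp: assms intro!: add_nonneg_nonneg matrix_mult_nonneg)

text \<open>To pass from level \<open>a + b + 1\<close> down to \<open>-1\<close>, first pass down to level \<open>a\<close>.\<close>

lemma first_passage_convolution:
  "first_passage Lm L0 L1 n (a + b + 1)
     = (\<Sum>m<n. first_passage Lm L0 L1 m b ** first_passage Lm L0 L1 (n - 1 - m) a)"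
proof (induction n arbitrary: a b)
  case 0
  then show ?case by simp
next
  case (Suc n)
  let ?f = "first_passage Lm L0 L1"
  have tail: "(\<Sum>m<n. ?f (Suc m) b ** ?f (n - 1 - m) a)
     = L0 ** ?f n (a + b + 1) + L1 ** ?f n (a + Suc b + 1)
       + (if b = 0 then 0 else Lm ** ?f n (a + (b - 1) + 1))"
    unfolding Suc.IH
    by (simp add: matrix_add_rdistrib sum.distrib matrix_mult_sum_right matrix_mul_assoc)
  have "(\<Sum>m<Suc n. ?f m b ** ?f (Suc n - 1 - m) a)
      = ?f 0 b ** ?f n a + (\<Sum>m<n. ?f (Suc m) b ** ?f (n - 1 - m) a)"
    unfolding sum.lessThan_Suc_shift by simp
  also have "\<dots> = L0 ** ?f n (a + b + 1) + L1 ** ?f n (Suc (a + b + 1)) + Lm ** ?f n (a + b)"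
    unfolding tail by (cases b) (auto simp: algebra_simps)
  finally show ?case by simp
qed

lemma sum_first_passage_le:
  assumes nn: "0 \<le> Lm" "0 \<le> L0" "0 \<le> L1" and R: "0 \<le> (R::'s::finite mat)"
    and W0: "\<And>a. 0 \<le> W a"
    and Wsup: "\<And>a. (if a = 0 then Lm ** R else 0) + L0 ** W a + L1 ** W (Suc a)
                    + (if a = 0 then 0 else Lm ** W (a - 1)) \<le> W a"
  shows "(\<Sum>n<N. first_passage Lm L0 L1 n a) ** R \<le> W a"
proof (induction N arbitrary: a)
  case 0
  then show ?case using W0 by simp
next
  case (Suc N)
  let ?S = "\<lambda>a. (\<Sum>n<N. first_passage Lm L0 L1 n a)"
  have "(\<Sum>n<Suc N. first_passage Lm L0 L1 n a) ** R
     = (if a = 0 then Lm ** R else 0) + L0 ** (?S a ** R) + L1 ** (?S (Suc a) ** R)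
       + (if a = 0 then 0 else Lm ** (?S (a - 1) ** R))"
    unfolding sum.lessThan_Suc_shift
    by (simp add: sum.distrib matrix_mult_sum_right matrix_add_rdistrib matrix_mul_assoc)
  also have "\<dots> \<le> (if a = 0 then Lm ** R else 0) + L0 ** W a + L1 ** W (Suc a)
                    + (if a = 0 then 0 else Lm ** W (a - 1))"
    using Suc.IH nn by (auto intro!: add_mono matrix_mult_left_mono)
  also have "\<dots> \<le> W a" by (rule Wsup)
  finally show ?case .
qed

lemma summable_first_passage_if_bounded:
  assumes nn: "0 \<le> Lm" "0 \<le> L0" "0 \<le> L1"
    and bd: "\<And>N. (\<Sum>n<N. first_passage Lm L0 L1 n a) \<le> (W::'s::finite mat)"
  shows "summable (\<lambda>n. first_passage Lm L0 L1 n a $ i $ j)"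
    and "(\<Sum>n. first_passage Lm L0 L1 n a $ i $ j) \<le> W $ i $ j"
proof -
  have nn': "0 \<le> first_passage Lm L0 L1 n a $ i $ j" for n
    using first_passage_nonneg[OF nn, of n a] by (simp add: less_eq_mat_iff)
  have b: "(\<Sum>n<N. first_passage Lm L0 L1 n a $ i $ j) \<le> W $ i $ j" for N
    using bd[of N] by (simp add: less_eq_mat_iff)
  show s: "summable (\<lambda>n. first_passage Lm L0 L1 n a $ i $ j)"
    by (rule summableI_nonneg_bounded[OF nn' b])
  show "(\<Sum>n. first_passage Lm L0 L1 n a $ i $ j) \<le> W $ i $ j"
    by (rule suminf_le_const[OF s b])
qed

section \<open>The G-matrix as minimal nonnegative solution\<close>

definition mult_on :: "'s set \<Rightarrow> 's rmat \<Rightarrow> 's rmat \<Rightarrow> 's rmat" where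
  "mult_on K A B i j = (\<Sum>k\<in>K. A i k * B k j)"

definition qbd_rhs :: "'s::finite rmat \<Rightarrow> 's rmat \<Rightarrow> 's rmat \<Rightarrow> 's rmat \<Rightarrow> 's rmat" where
  "qbd_rhs Lm L0 L1 X i j = Lm i j + mult_on UNIV L0 X i j + mult_on UNIV L1 (mult_on UNIV X X) i j"

definition qbd_summable :: "'s::finite rmat \<Rightarrow> 's rmat \<Rightarrow> 's rmat \<Rightarrow> bool" where
  "qbd_summable Lm L0 L1 \<longleftrightarrow>
     (\<forall>a i j. summable (\<lambda>n. first_passage (vmat Lm) (vmat L0) (vmat L1) n a $ i $ j))"

lemma vmat_qbd_rhs:
  "vmat (qbd_rhs Lm L0 L1 X) = vmat Lm + vmat L0 ** vmat X + vmat L1 ** (vmat X ** vmat X)"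
  by (simp add: vec_eq_iff qbd_rhs_def mult_on_def matrix_mult_nth)

lemma Gmat_nonneg:
  assumes "nonneg_mat Lm" "nonneg_mat L0" "nonneg_mat L1" "qbd_summable Lm L0 L1"
  shows "nonneg_mat (Gmat Lm L0 L1)"
  using assms first_passage_nonneg[OF vmat_nonneg vmat_nonneg vmat_nonneg, of Lm L0 L1]
  unfolding nonneg_mat_def Gmat_eq_suminf_first_passage qbd_summable_def
  by (auto intro!: suminf_nonneg simp: less_eq_mat_iff)

lemma Gmat_zero_column:
  assumes "\<And>k. Lm k j = 0"
  shows "Gmat Lm L0 L1 i j = 0"
proof -
  have "first_passage (vmat Lm) L0 L1 n a $ i $ j = 0" for n a i L0 L1
    using assms by (induction n arbitrary: a i) (auto simp: matrix_mult_nth)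
  then show ?thesis unfolding Gmat_eq_suminf_first_passage by simp
qed

text \<open>\<open>G\<close> is the minimal nonnegative solution of \<open>X = Lm + L0 X + L1 X\<^sup>2\<close>: a nonnegative
  supersolution \<open>X\<close> bounds the passage from level \<open>a\<close> by \<open>X\<^bsup>a+1\<^esup>\<close>.\<close>

lemma Gmat_le_supersolution:
  assumes nn: "nonneg_mat Lm" "nonneg_mat L0" "nonneg_mat L1" "nonneg_mat X"
    and sup: "\<And>i j. qbd_rhs Lm L0 L1 X i j \<le> X i j"
  shows "qbd_summable Lm L0 L1" and "Gmat Lm L0 L1 i j \<le> X i j"
proof -
  let ?X = "vmat X"
  note nn' = nn[THEN vmat_nonneg]
  have V: "vmat Lm + vmat L0 ** ?X + vmat L1 ** (?X ** ?X) \<le> ?X"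
    using sup unfolding vmat_qbd_rhs[symmetric] by (simp add: less_eq_mat_iff)
  have W: "(if a = 0 then vmat Lm ** mat 1 else 0) + vmat L0 ** matrix_pow ?X (Suc a)
          + vmat L1 ** matrix_pow ?X (Suc (Suc a))
          + (if a = 0 then 0 else vmat Lm ** matrix_pow ?X (Suc (a - 1)))
        \<le> matrix_pow ?X (Suc a)" for a
  proof -
    have "(if a = 0 then vmat Lm ** mat 1 else 0) + vmat L0 ** matrix_pow ?X (Suc a)
          + vmat L1 ** matrix_pow ?X (Suc (Suc a))
          + (if a = 0 then 0 else vmat Lm ** matrix_pow ?X (Suc (a - 1)))
        = (vmat Lm + vmat L0 ** ?X + vmat L1 ** (?X ** ?X)) ** matrix_pow ?X a"
      by (cases a) (auto simp: matrix_add_rdistrib matrix_mul_assoc)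
    also have "\<dots> \<le> ?X ** matrix_pow ?X a"
      by (rule matrix_mult_right_mono[OF matrix_pow_nonneg[OF nn'(4)] V])
    finally show ?thesis by simp
  qed
  have "(\<Sum>n<N. first_passage (vmat Lm) (vmat L0) (vmat L1) n a) ** mat 1
          \<le> matrix_pow ?X (Suc a)" for N a
    by (rule sum_first_passage_le[where W = "\<lambda>a. matrix_pow ?X (Suc a)",
          OF nn'(1-3) mat_1_nonneg matrix_pow_nonneg[OF nn'(4)] W])
  then have bd: "(\<Sum>n<N. first_passage (vmat Lm) (vmat L0) (vmat L1) n a) \<le> matrix_pow ?X (Suc a)"
    for N a by simp
  show "qbd_summable Lm L0 L1"
    unfolding qbd_summable_def using summable_first_passage_if_bounded(1)[OF nn'(1-3) bd] by blast
  show "Gmat Lm L0 L1 i j \<le> X i j"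
    unfolding Gmat_eq_suminf_first_passage
    using summable_first_passage_if_bounded(2)[OF nn'(1-3) bd, of 0 i j] by simp
qed

lemma Gmat_substochastic:
  fixes Lm L0 L1 :: "'s::finite rmat"
  assumes nn: "nonneg_mat Lm" "nonneg_mat L0" "nonneg_mat L1"
    and row: "\<And>i. (\<Sum>j\<in>UNIV. Lm i j + L0 i j + L1 i j) \<le> 1"
  shows "qbd_summable Lm L0 L1" and "(\<Sum>j\<in>UNIV. Gmat Lm L0 L1 i j) \<le> 1"
proof -
  let ?J = "(\<chi> i j. 1) :: 's mat"
  let ?f = "first_passage (vmat Lm) (vmat L0) (vmat L1)"
  note nn' = nn[THEN vmat_nonneg]
  have J: "0 \<le> ?J" by (simp add: less_eq_mat_iff)
  have Wsup: "(if a = 0 then vmat Lm ** ?J else 0) + vmat L0 ** ?J + vmat L1 ** ?J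
          + (if a = 0 then 0 else vmat Lm ** ?J) \<le> ?J" for a
  proof -
    have "(if a = 0 then vmat Lm ** ?J else 0) + vmat L0 ** ?J + vmat L1 ** ?J
          + (if a = 0 then 0 else vmat Lm ** ?J) = (vmat Lm + vmat L0 + vmat L1) ** ?J"
      by (auto simp: matrix_add_rdistrib)
    also have "\<dots> \<le> ?J"
      using row by (simp add: less_eq_mat_iff matrix_mult_nth sum.distrib)
    finally show ?thesis .
  qed
  have "(\<Sum>n<N. ?f n a) ** ?J \<le> ?J" for N a
    by (rule sum_first_passage_le[where W = "\<lambda>_. ?J", OF nn' J J Wsup])
  then have row_partial: "(\<Sum>k\<in>UNIV. \<Sum>n<N. ?f n a $ i $ k) \<le> 1" for N a i
    by (simp add: less_eq_mat_iff matrix_mult_nth)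
  have "(\<Sum>n<N. ?f n a $ i $ j) \<le> 1" for N a i j
  proof -
    have "(\<Sum>n<N. ?f n a $ i $ j) \<le> (\<Sum>k\<in>UNIV. \<Sum>n<N. ?f n a $ i $ k)"
      using first_passage_nonneg[OF nn'] unfolding less_eq_mat_iff
      by (intro member_le_sum sum_nonneg) auto
    then show ?thesis using row_partial by (rule order_trans)
  qed
  then have "(\<Sum>n<N. ?f n a) \<le> ?J" for N a
    by (simp add: less_eq_mat_iff)
  then have sm: "summable (\<lambda>n. ?f n a $ i $ j)" for a i j
    by (rule summable_first_passage_if_bounded(1)[OF nn'])
  then show "qbd_summable Lm L0 L1" unfolding qbd_summable_def by blast
  have "(\<Sum>j\<in>UNIV. Gmat Lm L0 L1 i j) = (\<Sum>n. \<Sum>j\<in>UNIV. ?f n 0 $ i $ j)"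
    unfolding Gmat_eq_suminf_first_passage by (rule suminf_sum[symmetric]) (rule sm)
  also have "\<dots> \<le> 1"
    using row_partial by (intro suminf_le_const summable_sum sm) (simp add: sum.swap[of _ UNIV])
  finally show "(\<Sum>j\<in>UNIV. Gmat Lm L0 L1 i j) \<le> 1" .
qed

lemma Gmat_fixed_point:
  assumes nn: "nonneg_mat Lm" "nonneg_mat L0" "nonneg_mat L1"
    and sm: "qbd_summable Lm L0 L1"
  shows "Gmat Lm L0 L1 = qbd_rhs Lm L0 L1 (Gmat Lm L0 L1)"
proof (intro ext)
  fix i j
  let ?f = "first_passage (vmat Lm) (vmat L0) (vmat L1)"
  define g where "g a i j = (\<Sum>n. ?f n a $ i $ j)" for a i j
  have sm: "summable (\<lambda>n. ?f n a $ i $ j)" for a i j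
    using sm by (simp add: qbd_summable_def)
  have G: "Gmat Lm L0 L1 = g 0"
    by (simp add: fun_eq_iff g_def Gmat_eq_suminf_first_passage)
  have g1: "g 1 k j = mult_on UNIV (g 0) (g 0) k j" for k j
  proof -
    have abs: "summable (\<lambda>n. norm (?f n 0 $ i $ j))" for i j
      using sm first_passage_nonneg[OF nn[THEN vmat_nonneg], of n 0 for n]
      by (simp add: less_eq_mat_iff)
    have conv: "?f (Suc n) 1 $ k $ j = (\<Sum>l\<in>UNIV. \<Sum>m\<le>n. ?f m 0 $ k $ l * ?f (n - m) 0 $ l $ j)"
      for n
      using first_passage_convolution[of "vmat Lm" "vmat L0" "vmat L1" "Suc n" 0 0]
      by (simp add: matrix_mult_nth lessThan_Suc_atMost sum.swap[of _ "{..n}"])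
    have "g 1 k j = (\<Sum>n. ?f (Suc n) 1 $ k $ j)"
      unfolding g_def using suminf_split_head[OF sm[of 1 k j]] by simp
    also have "\<dots> = (\<Sum>l\<in>UNIV. \<Sum>n. \<Sum>m\<le>n. ?f m 0 $ k $ l * ?f (n - m) 0 $ l $ j)"
      unfolding conv by (rule suminf_sum) (rule summable_Cauchy_product[OF abs abs])
    also have "\<dots> = mult_on UNIV (g 0) (g 0) k j"
      unfolding g_def mult_on_def by (rule sum.cong[OF refl], rule Cauchy_product[OF abs abs, symmetric])
    finally show ?thesis .
  qed
  have step: "?f (Suc n) 0 $ i $ j
      = (\<Sum>k\<in>UNIV. L0 i k * ?f n 0 $ k $ j) + (\<Sum>k\<in>UNIV. L1 i k * ?f n 1 $ k $ j)" for n
    by (simp add: matrix_mult_nth)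
  have "g 0 i j = Lm i j + (\<Sum>n. ?f (Suc n) 0 $ i $ j)"
    unfolding g_def using suminf_split_head[OF sm[of 0 i j]] by simp
  also have "(\<Sum>n. ?f (Suc n) 0 $ i $ j)
      = (\<Sum>n. \<Sum>k\<in>UNIV. L0 i k * ?f n 0 $ k $ j) + (\<Sum>n. \<Sum>k\<in>UNIV. L1 i k * ?f n 1 $ k $ j)"
    unfolding step by (rule suminf_add[symmetric]; intro summable_sum summable_mult sm)
  also have "(\<Sum>n. \<Sum>k\<in>UNIV. L0 i k * ?f n 0 $ k $ j) = mult_on UNIV L0 (g 0) i j"
    unfolding g_def mult_on_def by (subst suminf_sum) (auto intro!: summable_mult sm suminf_mult sum.cong)
  also have "(\<Sum>n. \<Sum>k\<in>UNIV. L1 i k * ?f n 1 $ k $ j) = mult_on UNIV L1 (g 1) i j"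
    unfolding g_def mult_on_def by (subst suminf_sum) (auto intro!: summable_mult sm suminf_mult sum.cong)
  finally show "Gmat Lm L0 L1 i j = qbd_rhs Lm L0 L1 (Gmat Lm L0 L1) i j"
    unfolding G qbd_rhs_def g1[abs_def] by simp
qed

lemma sum_UNIV_Compl_split: "sum f (UNIV::'s::finite set) = sum f A + sum f (- A)"
  using sum.Int_Diff[of UNIV f A] by (simp add: Compl_eq_Diff_UNIV)

lemma mult_on_assoc: "mult_on A (mult_on B X Y) Z i j = mult_on B X (mult_on A Y Z) i j"
  unfolding mult_on_def sum_distrib_left sum_distrib_right
  by (subst sum.swap) (simp add: mult.assoc)

lemma mult_on_idm_left: "mult_on A idm (Y::'s::finite rmat) i j = (if i \<in> A then Y i j else 0)"
  by (simp add: mult_on_def idm_def if_distrib if_distribR cong: if_cong)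

lemma mult_on_idm_right: "mult_on A (X::'s::finite rmat) idm i j = (if j \<in> A then X i j else 0)"
  by (simp add: mult_on_def idm_def if_distrib if_distribR cong: if_cong)

lemma mult_on_smul_left: "mult_on A (smul c M) X i j = c * mult_on A M X i j"
  by (simp add: mult_on_def smul_def sum_distrib_left mult.assoc)

lemma mult_on_zm_left: "mult_on A zm X i j = 0"
  by (simp add: mult_on_def zm_def)

text \<open>A one-sided inverse of a principal submatrix is two-sided: pad both matrices with the
  identity outside \<open>A\<close> and use the corresponding fact for square matrices.\<close>

lemma mult_on_inverse_commute:
  fixes K Z :: "'s::finite rmat"
  assumes inv: "\<And>i j. i \<in> A \<Longrightarrow> j \<in> A \<Longrightarrow> mult_on A K Z i j = idm i j"
    and "i \<in> A" "j \<in> A"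
  shows "mult_on A Z K i j = idm i j"
proof -
  define E :: "'s rmat \<Rightarrow> 's mat"
    where "E M = (\<chi> i j. if i \<in> A \<and> j \<in> A then M i j else idm i j)" for M
  have E_mult: "(E M ** E N) $ i $ j = (if i \<in> A \<and> j \<in> A then mult_on A M N i j else idm i j)"
    for M N i j
  proof (cases "i \<in> A")
    case i: True
    have "(\<Sum>k\<in>-A. E M $ i $ k * E N $ k $ j) = 0"
      using i by (intro sum.neutral) (auto simp: E_def idm_def)
    moreover have "(\<Sum>k\<in>A. E M $ i $ k * E N $ k $ j) = (if j \<in> A then mult_on A M N i j else 0)"
      using i by (cases "j \<in> A") (auto simp: E_def mult_on_def idm_def intro: sum.cong sum.neutral)
    ultimately show ?thesis
      using i by (auto simp: matrix_mult_nth sum_UNIV_Compl_split[of _ A] idm_def)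
  next
    case False
    then have "E M $ i $ k * E N $ k $ j = (if k = i then E N $ i $ j else 0)" for k
      by (simp add: E_def idm_def)
    then show ?thesis
      using False by (simp add: matrix_mult_nth) (simp add: E_def)
  qed
  have "E K ** E Z = mat 1"
    using inv by (auto simp: vec_eq_iff E_mult mat_def idm_def)
  then have "E Z ** E K = mat 1"
    using matrix_left_right_inverse by blast
  then show ?thesis
    using E_mult[of Z K i j] assms(2,3) by (simp add: mat_def idm_def)
qed

lemma inv_on_eqI:
  fixes K Z :: "'s::finite rmat"
  assumes inv: "\<And>i j. i \<in> A \<Longrightarrow> j \<in> A \<Longrightarrow> mult_on A K Z i j = idm i j"
    and ij: "i \<in> A" "j \<in> A"
  shows "inv_on A K i j = Z i j"
proof -
  let ?M = "inv_on A K"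
  have M: "mult_on A K ?M i j = idm i j" if "i \<in> A" "j \<in> A" for i j
    using someI_ex[of "\<lambda>B. \<forall>i\<in>A. \<forall>j\<in>A. mult_on A K B i j = idm i j"] inv that
    unfolding inv_on_def mult_on_def by blast
  have "Z i j = mult_on A Z idm i j" using ij by (simp add: mult_on_idm_right)
  also have "\<dots> = mult_on A Z (mult_on A K ?M) i j"
    using M ij by (auto simp: mult_on_def intro!: sum.cong)
  also have "\<dots> = mult_on A (mult_on A Z K) ?M i j" by (simp add: mult_on_assoc)
  also have "\<dots> = mult_on A idm ?M i j"
    using mult_on_inverse_commute[OF inv] ij by (auto simp: mult_on_def intro!: sum.cong)
  also have "\<dots> = ?M i j" using ij by (simp add: mult_on_idm_left)
  finally show ?thesis by simp
qed

definition zero_cols :: "'s set \<Rightarrow> 's rmat \<Rightarrow> bool" where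
  "zero_cols A X \<longleftrightarrow> (\<forall>i j. j \<in> A \<longrightarrow> X i j = 0)"

text \<open>On the columns in \<open>S\<^sub>-\<close>: one step of \<open>P\<close>, followed, when it lands in \<open>S\<^sub>+\<close>, by the
  return to \<open>S\<^sub>-\<close> described by the \<open>S\<^sub>+\<close> rows of \<open>X\<close>.\<close>

definition return_mat :: "'s::finite set \<Rightarrow> 's rmat \<Rightarrow> 's rmat \<Rightarrow> 's rmat" where
  "return_mat Sp P X i m = P i m + mult_on Sp P X i m"

definition Kmat :: "'s::finite set \<Rightarrow> 's rmat \<Rightarrow> 's rmat \<Rightarrow> 's rmat" where
  "Kmat Sp P X i j = 2 * idm i j - return_mat Sp P X i j"

lemma return_mat_cong:
  "(\<And>k. k \<in> Sp \<Longrightarrow> X k m = Y k m) \<Longrightarrow> return_mat Sp P X i m = return_mat Sp P Y i m"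
  unfolding return_mat_def mult_on_def by (auto intro: sum.cong)

lemma Kmat_cong:
  "(\<And>k. k \<in> Sp \<Longrightarrow> X k m = Y k m) \<Longrightarrow> Kmat Sp P X i m = Kmat Sp P Y i m"
  unfolding Kmat_def using return_mat_cong by metis

lemma mult_on_Kmat:
  assumes "i \<notin> Sp"
  shows "mult_on (-Sp) (Kmat Sp P X) Y i j = 2 * Y i j - mult_on (-Sp) (return_mat Sp P X) Y i j"
proof -
  have "mult_on (-Sp) (Kmat Sp P X) Y i j
      = 2 * mult_on (-Sp) idm Y i j - mult_on (-Sp) (return_mat Sp P X) Y i j"
    by (simp add: mult_on_def Kmat_def left_diff_distrib sum_subtractf sum_distrib_left mult.assoc)
  then show ?thesis using assms by (simp add: mult_on_idm_left)
qed

lemma mult_on_return_mat: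
  "mult_on (-Sp) (return_mat Sp P X) X i j
     = mult_on (-Sp) P X i j + mult_on Sp P (mult_on (-Sp) X X) i j"
  unfolding return_mat_def mult_on_def
  by (simp add: algebra_simps sum.distrib sum_distrib_left sum_distrib_right sum.swap[of _ Sp])

lemma mult_on_return_mat_mono:
  assumes "nonneg_mat P" "nonneg_mat X" "\<And>i j. X i j \<le> Y i j"
  shows "mult_on (-Sp) (return_mat Sp P X) X i j \<le> mult_on (-Sp) (return_mat Sp P Y) Y i j"
proof -
  have "0 \<le> Y i j" for i j using assms(2,3) order_trans unfolding nonneg_mat_def by metis
  then show ?thesis
    using assms unfolding mult_on_return_mat unfolding nonneg_mat_def mult_on_def
    by (intro add_mono sum_mono mult_left_mono mult_mono) (auto intro: sum_nonneg)
qed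

lemma qbd_rhs_blk:
  fixes X :: "'s::finite rmat"
  assumes "zero_cols Sp X"
  shows "qbd_rhs (blk Sp zm zm zm Bm) (blk Sp a b zm d) (blk Sp e zm f zm) X i j =
    (if j \<in> Sp then 0
     else if i \<in> Sp then mult_on Sp a X i j + mult_on (-Sp) b X i j
                          + mult_on Sp e (mult_on (-Sp) X X) i j
     else Bm i j + mult_on (-Sp) d X i j + mult_on Sp f (mult_on (-Sp) X X) i j)"
proof -
  have XX: "mult_on UNIV X X = mult_on (-Sp) X X"
    using assms by (simp add: fun_eq_iff mult_on_def sum_UNIV_Compl_split[of _ Sp] zero_cols_def)
  show ?thesis
    using assms unfolding qbd_rhs_def XX
    by (simp add: mult_on_def sum_UNIV_Compl_split[of _ Sp] blk_def zm_def zero_cols_def)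
qed

lemma qbd_rhs_A':
  assumes "zero_cols Sp X"
  shows "qbd_rhs (blk Sp zm zm zm (smul (1/2) idm))
           (blk Sp (smul (1/2) idm) (smul (1/2) P) zm (smul (1/2) P))
           (blk Sp (smul (1/2) P) zm (smul (1/2) P) zm) X i j =
    (if j \<in> Sp then 0
     else if i \<in> Sp then (X i j + mult_on (-Sp) (return_mat Sp P X) X i j) / 2
     else (idm i j + mult_on (-Sp) (return_mat Sp P X) X i j) / 2)"
  unfolding qbd_rhs_blk[OF assms] mult_on_return_mat
  by (simp add: mult_on_smul_left mult_on_idm_left smul_def)

lemma qbd_rhs_D:
  assumes "zero_cols Sp X"
  shows "qbd_rhs (blk Sp zm zm zm (smul (1/2) idm))
           (blk Sp zm P zm (smul (1/2) P)) (blk Sp P zm (smul (1/2) P) zm) X i j =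
    (if j \<in> Sp then 0
     else if i \<in> Sp then mult_on (-Sp) (return_mat Sp P X) X i j
     else (idm i j + mult_on (-Sp) (return_mat Sp P X) X i j) / 2)"
  unfolding qbd_rhs_blk[OF assms] mult_on_return_mat
  by (simp add: mult_on_smul_left mult_on_zm_left smul_def)

lemma qbd_rhs_A:
  assumes "zero_cols Sp X"
  shows "qbd_rhs (blk Sp zm zm zm M) (blk Sp zm P zm zm) (blk Sp P zm zm zm) X i j =
    (if j \<in> Sp then 0
     else if i \<in> Sp then mult_on (-Sp) (return_mat Sp P X) X i j
     else M i j)"
  unfolding qbd_rhs_blk[OF assms] mult_on_return_mat
  by (simp add: mult_on_zm_left)

section \<open>The uniformized fluid queue\<close>

lemma Plam_nonneg:
  assumes "is_generator T" "lam > 0" "\<forall>i. lam \<ge> \<bar>T i i\<bar>"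
  shows "nonneg_mat (Plam lam T)"
  unfolding nonneg_mat_def
proof (intro allI)
  fix i j
  show "0 \<le> Plam lam T i j"
  proof (cases "i = j")
    case True
    then have "- lam \<le> T i i" using assms(3) by (metis abs_le_iff minus_le_iff)
    then show ?thesis using True assms(2) by (simp add: Plam_def idm_def field_simps)
  next
    case False
    then show ?thesis using assms(1,2) by (simp add: Plam_def idm_def is_generator_def)
  qed
qed

lemma Plam_row_sum:
  assumes "is_generator T"
  shows "(\<Sum>j\<in>UNIV. Plam lam T i j) = 1"
  using assms by (simp add: Plam_def sum.distrib idm_def sum_divide_distrib[symmetric] is_generator_def)

lemma riccati_eq_Umat:
  "riccati Sp T X i j = Umat Sp T X i j + mult_on (-Sp) X (Umat Sp T X) i j"
  unfolding riccati_def Umat_def mult_on_def Sm_def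
  by (simp add: algebra_simps sum.distrib sum_distrib_left mult.assoc)

lemma return_mat_Plam:
  "return_mat Sp (Plam lam T) X i j = idm i j + (if i \<in> Sp then X i j else 0) + Umat Sp T X i j / lam"
proof -
  have "mult_on Sp (Plam lam T) X i j = mult_on Sp idm X i j + (\<Sum>k\<in>Sp. T i k * X k j) / lam"
    by (simp add: mult_on_def Plam_def distrib_right sum.distrib sum_divide_distrib)
  then show ?thesis
    by (simp add: return_mat_def Plam_def Umat_def add_divide_distrib mult_on_idm_left)
qed

lemma Kmat_Plam: "i \<notin> Sp \<Longrightarrow> Kmat Sp (Plam lam T) X i j = idm i j - Umat Sp T X i j / lam"
  by (simp add: Kmat_def return_mat_Plam)

lemma riccati_eq_0_iff:
  assumes lam: "lam > 0" and ij: "i \<in> Sp" "j \<notin> Sp"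
  shows "riccati Sp T X i j = 0 \<longleftrightarrow>
    mult_on (-Sp) X (Kmat Sp (Plam lam T) X) i j = return_mat Sp (Plam lam T) X i j"
proof -
  have "mult_on (-Sp) X (Kmat Sp (Plam lam T) X) i j
      = mult_on (-Sp) X idm i j - mult_on (-Sp) X (Umat Sp T X) i j / lam"
    by (simp add: mult_on_def Kmat_Plam right_diff_distrib sum_subtractf sum_divide_distrib)
  also have "\<dots> = X i j - mult_on (-Sp) X (Umat Sp T X) i j / lam"
    using ij by (simp add: mult_on_idm_right)
  finally show ?thesis
    using lam ij by (auto simp: riccati_eq_Umat return_mat_Plam idm_def field_simps)
qed

locale fluid_queue =
  fixes Sp :: "'s::finite set" and T Psi :: "'s rmat" and lam :: real
  assumes generator: "is_generator T"
    and Psi: "min_nonneg_riccati_sol Sp T Psi"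
    and lam_pos: "lam > 0" and lam_ge: "\<forall>i. lam \<ge> \<bar>T i i\<bar>"
begin

abbreviation "P \<equiv> Plam lam T"
abbreviation "A'm \<equiv> blk Sp zm zm zm (smul (1/2) idm)"
abbreviation "A'0 \<equiv> blk Sp (smul (1/2) idm) (smul (1/2) P) zm (smul (1/2) P)"
abbreviation "A'1 \<equiv> blk Sp (smul (1/2) P) zm (smul (1/2) P) zm"
abbreviation "G \<equiv> Gmat A'm A'0 A'1"

lemma P_nonneg: "nonneg_mat P"
  using Plam_nonneg generator lam_pos lam_ge .

lemma P_row_sum: "(\<Sum>j\<in>UNIV. P i j) = 1"
  using Plam_row_sum generator .

lemma A'_nonneg: "nonneg_mat A'm" "nonneg_mat A'0" "nonneg_mat A'1"
  by (auto intro!: nonneg_mat_intros P_nonneg)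

lemma G_summable: "qbd_summable A'm A'0 A'1"
  and G_row_sum_le: "(\<Sum>j\<in>UNIV. G i j) \<le> 1"
proof -
  have "A'm i j + A'0 i j + A'1 i j = idm i j / 2 + P i j / 2" for i j
    by (auto simp: blk_def smul_def zm_def idm_def)
  then have "(\<Sum>j\<in>UNIV. A'm i j + A'0 i j + A'1 i j) \<le> 1" for i
    by (simp add: sum.distrib P_row_sum flip: sum_divide_distrib) (simp add: idm_def)
  then show "qbd_summable A'm A'0 A'1" "(\<Sum>j\<in>UNIV. G i j) \<le> 1"
    using Gmat_substochastic A'_nonneg by blast+
qed

lemma G_nonneg: "nonneg_mat G"
  using Gmat_nonneg[OF A'_nonneg G_summable] .

lemma G_zero_cols: "zero_cols Sp G"
  unfolding zero_cols_def by (auto intro!: Gmat_zero_column simp: blk_def zm_def)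

lemma G_fixed_point:
  assumes "j \<notin> Sp"
  shows "i \<in> Sp \<Longrightarrow> G i j = mult_on (-Sp) (return_mat Sp P G) G i j"
    and "i \<notin> Sp \<Longrightarrow> 2 * G i j = idm i j + mult_on (-Sp) (return_mat Sp P G) G i j"
  using fun_cong[OF fun_cong[OF Gmat_fixed_point[OF A'_nonneg G_summable]], of i j]
    qbd_rhs_A'[OF G_zero_cols, of P i j] assms
  by auto

lemma Kmat_G_mult_G:
  "i \<notin> Sp \<Longrightarrow> j \<notin> Sp \<Longrightarrow> mult_on (-Sp) (Kmat Sp P G) G i j = idm i j"
  using G_fixed_point(2) by (simp add: mult_on_Kmat)

lemma G_mult_Kmat_G:
  "i \<notin> Sp \<Longrightarrow> j \<notin> Sp \<Longrightarrow> mult_on (-Sp) G (Kmat Sp P G) i j = idm i j"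
  using mult_on_inverse_commute[of "-Sp" "Kmat Sp P G" G] Kmat_G_mult_G by simp

lemma G_riccati: "nonneg_riccati_sol Sp T G"
  unfolding nonneg_riccati_sol_def
proof (intro ballI conjI)
  fix i j assume i: "i \<in> Sp" and j: "j \<in> Sm Sp"
  then have j: "j \<notin> Sp" by (simp add: Sm_def)
  show "0 \<le> G i j" using G_nonneg by (simp add: nonneg_mat_def)
  have "mult_on (-Sp) G (Kmat Sp P G) i j
      = mult_on (-Sp) (mult_on (-Sp) (return_mat Sp P G) G) (Kmat Sp P G) i j"
    using G_fixed_point(1)[OF _ i] by (auto simp: mult_on_def intro!: sum.cong)
  also have "\<dots> = mult_on (-Sp) (return_mat Sp P G) (mult_on (-Sp) G (Kmat Sp P G)) i j"
    by (rule mult_on_assoc)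
  also have "\<dots> = mult_on (-Sp) (return_mat Sp P G) idm i j"
    using G_mult_Kmat_G j by (auto simp: mult_on_def intro!: sum.cong)
  also have "\<dots> = return_mat Sp P G i j"
    using j by (simp add: mult_on_idm_right)
  finally show "riccati Sp T G i j = 0"
    using riccati_eq_0_iff[OF lam_pos i j] by simp
qed

lemma Psi_le_G: "i \<in> Sp \<Longrightarrow> j \<notin> Sp \<Longrightarrow> Psi i j \<le> G i j"
  using Psi G_riccati by (simp add: min_nonneg_riccati_sol_def Sm_def)

lemma Psi_nonneg: "i \<in> Sp \<Longrightarrow> j \<notin> Sp \<Longrightarrow> 0 \<le> Psi i j"
  using Psi by (simp add: min_nonneg_riccati_sol_def nonneg_riccati_sol_def Sm_def)

lemma Psi_riccati:
  assumes "i \<in> Sp" "j \<notin> Sp"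
  shows "mult_on (-Sp) Psi (Kmat Sp P Psi) i j = return_mat Sp P Psi i j"
  using Psi assms riccati_eq_0_iff[OF lam_pos assms, of T Psi]
  by (simp add: min_nonneg_riccati_sol_def nonneg_riccati_sol_def Sm_def)

lemma return_mat_Psi_row_sum_le: "(\<Sum>j\<in>-Sp. return_mat Sp P Psi i j) \<le> 1"
proof -
  have Psi_row: "(\<Sum>j\<in>-Sp. Psi k j) \<le> 1" if "k \<in> Sp" for k
  proof -
    have "(\<Sum>j\<in>-Sp. Psi k j) \<le> (\<Sum>j\<in>-Sp. G k j)"
      using Psi_le_G that by (intro sum_mono) auto
    also have "\<dots> \<le> (\<Sum>j\<in>UNIV. G k j)"
      using G_nonneg by (simp add: sum_UNIV_Compl_split[of _ Sp] nonneg_mat_def sum_nonneg)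
    finally show ?thesis using G_row_sum_le order_trans by blast
  qed
  have "(\<Sum>j\<in>-Sp. return_mat Sp P Psi i j)
      = (\<Sum>j\<in>-Sp. P i j) + (\<Sum>k\<in>Sp. P i k * (\<Sum>j\<in>-Sp. Psi k j))"
    by (simp add: return_mat_def mult_on_def sum.distrib sum_distrib_left sum.swap[of _ Sp])
  also have "\<dots> \<le> (\<Sum>j\<in>-Sp. P i j) + (\<Sum>k\<in>Sp. P i k)"
    using P_nonneg Psi_row unfolding nonneg_mat_def
    by (intro add_left_mono sum_mono mult_right_le_one_le) (auto intro: sum_nonneg Psi_nonneg)
  also have "\<dots> = 1"
    using P_row_sum[of i] by (simp add: sum_UNIV_Compl_split[of _ Sp])
  finally show ?thesis .
qed

text \<open>\<open>K(\<Psi>) = 2I - N\<close> on \<open>S\<^sub>- \<times> S\<^sub>-\<close> has a nonnegative inverse because \<open>N\<close> is substochastic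
  there; it is obtained as the \<open>G\<close>-matrix of the QBD with blocks \<open>[0, 0; 0, I/2]\<close>,
  \<open>[0, 0; 0, N/2]\<close> and \<open>0\<close>, i.e. as the Neumann series of \<open>N/2\<close>.\<close>

lemma Kmat_Psi_nonneg_inverse:
  obtains Z where "nonneg_mat Z"
    and "\<And>i j. i \<notin> Sp \<Longrightarrow> j \<notin> Sp \<Longrightarrow> mult_on (-Sp) (Kmat Sp P Psi) Z i j = idm i j"
proof
  let ?N = "return_mat Sp P Psi"
  define L0 where "L0 = blk Sp zm zm zm (smul (1/2) ?N)"
  define L1 :: "'s rmat" where "L1 = blk Sp zm zm zm zm"
  have N_nonneg: "0 \<le> ?N i j" if "j \<notin> Sp" for i j
    using P_nonneg Psi_nonneg that unfolding return_mat_def mult_on_def nonneg_mat_def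
    by (auto intro!: add_nonneg_nonneg sum_nonneg)
  have nn: "nonneg_mat A'm" "nonneg_mat L0" "nonneg_mat L1"
    using N_nonneg by (auto simp: L0_def L1_def nonneg_mat_def blk_def zm_def smul_def idm_def)
  have "(\<Sum>j\<in>UNIV. A'm i j + L0 i j + L1 i j) \<le> 1" for i
  proof (cases "i \<in> Sp")
    case False
    have "(\<Sum>j\<in>UNIV. A'm i j + L0 i j + L1 i j) = (1 + (\<Sum>j\<in>-Sp. ?N i j)) / 2"
      using False
      by (simp add: sum_UNIV_Compl_split[of _ Sp] L0_def L1_def blk_def zm_def smul_def
          sum.distrib add_divide_distrib flip: sum_divide_distrib) (simp add: idm_def)
    then show ?thesis using return_mat_Psi_row_sum_le[of i] by simp
  qed (simp add: L0_def L1_def blk_def zm_def)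
  then have sm: "qbd_summable A'm L0 L1"
    using Gmat_substochastic(1)[OF nn] by blast
  define Z where "Z = Gmat A'm L0 L1"
  show "nonneg_mat Z"
    unfolding Z_def by (rule Gmat_nonneg[OF nn sm])
  have zc: "zero_cols Sp Z"
    unfolding zero_cols_def Z_def by (auto intro!: Gmat_zero_column simp: blk_def zm_def)
  fix i j assume ij: "i \<notin> Sp" "j \<notin> Sp"
  have "Z i j = idm i j / 2 + mult_on (-Sp) ?N Z i j / 2"
    using fun_cong[OF fun_cong[OF Gmat_fixed_point[OF nn sm]], of i j, folded Z_def]
      qbd_rhs_blk[OF zc, where Bm = "smul (1/2) idm" and a = zm and b = zm and d = "smul (1/2) ?N"
        and e = zm and f = zm] ij
    by (simp add: L0_def L1_def mult_on_smul_left mult_on_zm_left smul_def)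
  then show "mult_on (-Sp) (Kmat Sp P Psi) Z i j = idm i j"
    using ij by (simp add: mult_on_Kmat)
qed

text \<open>\<open>[0, \<Psi>; 0, K(\<Psi>)\<^sup>-\<^sup>1]\<close> solves the fixed-point equation of \<open>G\<close>, which is minimal.\<close>

lemma G_le_Psi:
  assumes "i \<in> Sp" "j \<notin> Sp"
  shows "G i j \<le> Psi i j"
proof -
  obtain Z where Z: "nonneg_mat Z"
    and KZ: "\<And>i j. i \<notin> Sp \<Longrightarrow> j \<notin> Sp \<Longrightarrow> mult_on (-Sp) (Kmat Sp P Psi) Z i j = idm i j"
    using Kmat_Psi_nonneg_inverse by blast
  define X where "X i j = (if j \<in> Sp then 0 else if i \<in> Sp then Psi i j else Z i j)" for i j
  have zc: "zero_cols Sp X" by (simp add: zero_cols_def X_def)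
  have X_nonneg: "nonneg_mat X"
    using Z Psi_nonneg by (simp add: nonneg_mat_def X_def)
  have Q: "mult_on (-Sp) (return_mat Sp P X) X i j = mult_on (-Sp) (return_mat Sp P Psi) Z i j"
    if "j \<notin> Sp" for i j
    using that unfolding mult_on_def
    by (intro sum.cong refl) (auto simp: X_def intro!: arg_cong2[where f = "(*)"] return_mat_cong)
  have NZ: "mult_on (-Sp) (return_mat Sp P Psi) Z i j = Psi i j" if "i \<in> Sp" "j \<notin> Sp" for i j
  proof -
    have "mult_on (-Sp) (return_mat Sp P Psi) Z i j
        = mult_on (-Sp) (mult_on (-Sp) Psi (Kmat Sp P Psi)) Z i j"
      using Psi_riccati[OF that(1)] by (auto simp: mult_on_def intro!: sum.cong)
    also have "\<dots> = mult_on (-Sp) Psi (mult_on (-Sp) (Kmat Sp P Psi) Z) i j"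
      by (rule mult_on_assoc)
    also have "\<dots> = mult_on (-Sp) Psi idm i j"
      using KZ that(2) by (auto simp: mult_on_def intro!: sum.cong)
    finally show ?thesis using that(2) by (simp add: mult_on_idm_right)
  qed
  have "qbd_rhs A'm A'0 A'1 X i j = X i j" for i j
    using Q[of j i] NZ[of i j] KZ[of i j]
    by (auto simp: qbd_rhs_A'[OF zc] X_def mult_on_Kmat)
  then have "G i j \<le> X i j"
    using Gmat_le_supersolution(2)[OF A'_nonneg X_nonneg] by simp
  then show ?thesis using assms by (simp add: X_def)
qed

lemma G_eq_Psi: "i \<in> Sp \<Longrightarrow> j \<notin> Sp \<Longrightarrow> G i j = Psi i j"
  using G_le_Psi Psi_le_G by (simp add: order_antisym)

lemma G_eq_inv_on:
  assumes "i \<notin> Sp" "j \<notin> Sp"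
  shows "G i j = inv_on (Sm Sp) (\<lambda>i j. idm i j - Umat Sp T Psi i j / lam) i j"
proof -
  have "idm i k - Umat Sp T Psi i k / lam = Kmat Sp P G i k" if "i \<notin> Sp" "k \<notin> Sp" for i k
  proof -
    have "Kmat Sp P G i k = Kmat Sp P Psi i k"
      using that G_eq_Psi by (intro Kmat_cong) auto
    then show ?thesis using Kmat_Plam[OF that(1)] by metis
  qed
  then have "mult_on (-Sp) (\<lambda>i j. idm i j - Umat Sp T Psi i j / lam) G i j = idm i j"
    if "i \<notin> Sp" "j \<notin> Sp" for i j
    using that Kmat_G_mult_G[OF that] by (simp add: mult_on_def)
  then have "inv_on (-Sp) (\<lambda>i j. idm i j - Umat Sp T Psi i j / lam) i j = G i j"
    using assms by (intro inv_on_eqI) auto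
  then show ?thesis by (simp add: Sm_def)
qed

lemma Gmat_D_eq_G:
  "Gmat A'm (blk Sp zm P zm (smul (1/2) P)) (blk Sp P zm (smul (1/2) P) zm) = G"
    (is "Gmat A'm ?D0 ?D1 = G")
proof -
  let ?GD = "Gmat A'm ?D0 ?D1"
  have nn: "nonneg_mat A'm" "nonneg_mat ?D0" "nonneg_mat ?D1"
    by (auto intro!: nonneg_mat_intros P_nonneg)
  have "A'm i j + ?D0 i j + ?D1 i j = (if i \<in> Sp then P i j else idm i j / 2 + P i j / 2)" for i j
    by (auto simp: blk_def smul_def zm_def idm_def)
  then have "(\<Sum>j\<in>UNIV. A'm i j + ?D0 i j + ?D1 i j) \<le> 1" for i
    by (cases "i \<in> Sp") (simp_all add: sum.distrib P_row_sum idm_def flip: sum_divide_distrib)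
  then have sm: "qbd_summable A'm ?D0 ?D1"
    using Gmat_substochastic(1)[OF nn] by blast
  have zc: "zero_cols Sp ?GD"
    unfolding zero_cols_def by (auto intro!: Gmat_zero_column simp: blk_def zm_def)
  have GD: "?GD i j = qbd_rhs A'm ?D0 ?D1 ?GD i j" for i j
    by (subst Gmat_fixed_point[OF nn sm]) simp
  have "qbd_rhs A'm A'0 A'1 ?GD i j = ?GD i j" for i j
    using GD[of i j] unfolding qbd_rhs_A'[OF zc] qbd_rhs_D[OF zc] by auto
  then have le: "G i j \<le> ?GD i j" for i j
    using Gmat_le_supersolution(2)[OF A'_nonneg Gmat_nonneg[OF nn sm]] by simp
  have "qbd_rhs A'm ?D0 ?D1 G i j = G i j" for i j
    using G_fixed_point[of j i] G_zero_cols unfolding qbd_rhs_D[OF G_zero_cols]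
    by (auto simp: zero_cols_def)
  then have "?GD i j \<le> G i j" for i j
    using Gmat_le_supersolution(2)[OF nn G_nonneg] by simp
  with le show ?thesis by (intro ext antisym)
qed

lemma Gmat_A_eq_G:
  "Gmat (blk Sp zm zm zm (inv_on (Sm Sp) (\<lambda>i j. idm i j - Umat Sp T Psi i j / lam)))
     (blk Sp zm P zm zm) (blk Sp P zm zm zm) = G"
    (is "Gmat ?Am ?A0 ?A1 = G")
proof -
  let ?M = "inv_on (Sm Sp) (\<lambda>i j. idm i j - Umat Sp T Psi i j / lam)"
  let ?GA = "Gmat ?Am ?A0 ?A1"
  have "0 \<le> ?M i j" if "i \<notin> Sp" "j \<notin> Sp" for i j
  proof -
    have "0 \<le> G i j" using G_nonneg by (simp add: nonneg_mat_def)
    then show ?thesis using G_eq_inv_on[OF that] by simp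
  qed
  then have nn: "nonneg_mat ?Am" "nonneg_mat ?A0" "nonneg_mat ?A1"
    using P_nonneg by (auto simp: nonneg_mat_def blk_def zm_def)
  have "qbd_rhs ?Am ?A0 ?A1 G i j = G i j" for i j
    using G_fixed_point(1)[of j i] G_eq_inv_on[of i j] G_zero_cols
    unfolding qbd_rhs_A[OF G_zero_cols] zero_cols_def by presburger
  then have sm: "qbd_summable ?Am ?A0 ?A1" and le: "?GA i j \<le> G i j" for i j
    using Gmat_le_supersolution[OF nn G_nonneg] by simp_all
  have GA_nonneg: "nonneg_mat ?GA" by (rule Gmat_nonneg[OF nn sm])
  have zc: "zero_cols Sp ?GA"
    unfolding zero_cols_def by (auto intro!: Gmat_zero_column simp: blk_def zm_def)
  have GA: "?GA i j = qbd_rhs ?Am ?A0 ?A1 ?GA i j" for i j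
    by (subst Gmat_fixed_point[OF nn sm]) simp
  have "qbd_rhs A'm A'0 A'1 ?GA i j \<le> ?GA i j" for i j
  proof (cases "i \<in> Sp \<or> j \<in> Sp")
    case True
    then show ?thesis
      using GA[of i j] unfolding qbd_rhs_A'[OF zc] qbd_rhs_A[OF zc] by (auto simp: field_simps)
  next
    case False
    have "mult_on (-Sp) (return_mat Sp P ?GA) ?GA i j \<le> mult_on (-Sp) (return_mat Sp P G) G i j"
      using GA_nonneg le P_nonneg by (intro mult_on_return_mat_mono)
    moreover have "?GA i j = G i j"
      using GA[of i j] G_eq_inv_on[of i j] False unfolding qbd_rhs_A[OF zc] by presburger
    ultimately show ?thesis
      using G_fixed_point(2)[of j i] False unfolding qbd_rhs_A'[OF zc] by auto
  qed
  then have "G i j \<le> ?GA i j" for i j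
    using Gmat_le_supersolution(2)[OF A'_nonneg GA_nonneg] by simp
  with le show ?thesis by (intro ext antisym)
qed

end

theorem theorem3:
  fixes T Psi :: "('s::finite) \<Rightarrow> 's \<Rightarrow> real"
    and Sp :: "'s set" and lam :: real
  assumes gen: "is_generator T"
    and Sp_ne: "Sp \<noteq> {}" and Sm_ne: "Sm Sp \<noteq> {}"
    and Psi: "min_nonneg_riccati_sol Sp T Psi"
    and lam_pos: "lam > 0" and lam_ge: "\<forall>i. lam \<ge> \<bar>T i i\<bar>"
  defines "P \<equiv> Plam lam T"
    and "U \<equiv> Umat Sp T Psi"
  defines "Dm \<equiv> blk Sp zm zm zm (smul (1/2) idm)"
    and "D0 \<equiv> blk Sp zm P zm (smul (1/2) P)"
    and "D1 \<equiv> blk Sp P zm (smul (1/2) P) zm"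
  defines "A'm \<equiv> blk Sp zm zm zm (smul (1/2) idm)"
    and "A'0 \<equiv> blk Sp (smul (1/2) idm) (smul (1/2) P) zm (smul (1/2) P)"
    and "A'1 \<equiv> blk Sp (smul (1/2) P) zm (smul (1/2) P) zm"
  defines "Am \<equiv> blk Sp zm zm zm (inv_on (Sm Sp) (\<lambda>i j. idm i j - U i j / lam))"
    and "A0 \<equiv> blk Sp zm P zm zm"
    and "A1 \<equiv> blk Sp P zm zm zm"
  shows "Gmat A'm A'0 A'1 = Gmat Dm D0 D1 \<and> Gmat A'm A'0 A'1 = Gmat Am A0 A1"
proof -
  interpret fluid_queue Sp T Psi lam
    using gen Psi lam_pos lam_ge by unfold_locales
  show ?thesis
    unfolding P_def U_def Dm_def D0_def D1_def A'm_def A'0_def A'1_def Am_def A0_def A1_def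
    using Gmat_D_eq_G Gmat_A_eq_G by simp
qed

end
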